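(* There exist a $16\times16$ bimagic square and a $25\times25$ pandiagonal bimagic square, each with pairwise distinct entries that are nonnegative integers whose decimal digits all lie in $\{0,1,2\}$, both having the same magic sum $S1=222222220$; moreover each of the sixteen $4\times4$ blocks of the first is a magic square with magic sum $55555555$, and each of the twenty-five $5\times5$ blocks of the second is a magic square with magic sum $44444444$.
   Context: A magic square of order $n$ is an $n\times n$ array of numbers in which the sums of the entries of each row, of each column and of each of the two principal diagonals all equal a common value $S1$. It is bimagic if in addition the sums of the squares of the entries of each row, each column and each of the two principal diagonals all equal a common value $S2$. It is pandiagonal if all broken diagonals also have sum $S1$. The $m\times m$ blocks of an $m^2\times m^2$ array are the subarrays with rows $mp+1,\dots,mp+m$ and columns $mq+1,\dots,mq+m$, $0\le p,q\le m-1$. *)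

theory Defs
  imports Main
begin

text \<open>An n x n array is modelled as a function A :: nat => nat => int, with rows and
columns indexed by 0..n-1 (0-based). Only the values at indices below n matter.\<close>

definition magic_square :: "nat \<Rightarrow> int \<Rightarrow> (nat \<Rightarrow> nat \<Rightarrow> int) \<Rightarrow> bool" where
  "magic_square n S1 A \<longleftrightarrow>
     (\<forall>i<n. (\<Sum>j<n. A i j) = S1) \<and>
     (\<forall>j<n. (\<Sum>i<n. A i j) = S1) \<and>
     (\<Sum>i<n. A i i) = S1 \<and>
     (\<Sum>i<n. A i (n - 1 - i)) = S1"

definition bimagic_square :: "nat \<Rightarrow> int \<Rightarrow> (nat \<Rightarrow> nat \<Rightarrow> int) \<Rightarrow> bool" where
  "bimagic_square n S1 A \<longleftrightarrow> magic_square n S1 A \<and>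
     (\<exists>S2. magic_square n S2 (\<lambda>i j. (A i j)^2))"

definition pandiagonal :: "nat \<Rightarrow> int \<Rightarrow> (nat \<Rightarrow> nat \<Rightarrow> int) \<Rightarrow> bool" where
  "pandiagonal n S1 A \<longleftrightarrow>
     (\<forall>k<n. (\<Sum>i<n. A i ((i + k) mod n)) = S1) \<and>
     (\<forall>k<n. (\<Sum>i<n. A i ((k + n - i) mod n)) = S1)"

text \<open>The (p,q) block of size m: rows m*p+1..m*p+m, columns m*q+1..m*q+m (1-based).\<close>
definition block :: "nat \<Rightarrow> nat \<Rightarrow> nat \<Rightarrow> (nat \<Rightarrow> nat \<Rightarrow> int) \<Rightarrow> (nat \<Rightarrow> nat \<Rightarrow> int)" where
  "block m p q A = (\<lambda>i j. A (m * p + i) (m * q + j))"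

definition distinct_entries :: "nat \<Rightarrow> (nat \<Rightarrow> nat \<Rightarrow> int) \<Rightarrow> bool" where
  "distinct_entries n A \<longleftrightarrow> inj_on (\<lambda>(i, j). A i j) ({..<n} \<times> {..<n})"

definition digits_012 :: "int \<Rightarrow> bool" where
  "digits_012 x \<longleftrightarrow> x \<ge> 0 \<and> (\<forall>k::nat. (x div 10 ^ k) mod 10 \<in> {0, 1, 2})"

end

theory Submission
  imports Defs
begin

(* The theorem is an existence statement; it is proved by exhibiting the two squares
   and verifying each required property by evaluation (code_simp: rewriting with code
   equations inside the logic, no oracle).

   Two properties are not directly decidable and are first reduced to finite checks.
   (1) digits_012 quantifies over all digit positions, so each entry comes with its
   decimal expansion (least significant digit first); a number whose expansion uses
   only the digits 0, 1, 2 satisfies digits_012.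
   (2) Distinctness of the entries is proved with a decoder: the squares arise from
   the coordinates (i, j) by an invertible linear map over GF(2) (order 16) or GF(5)
   (order 25), each resulting symbol being written as a pair of ternary digits.  A
   function recovering (i, j) from the expansion of the (i, j) entry shows that equal
   entries sit at equal positions; this costs one evaluation per cell. *)

lemma all_less_iff_list_all: "(\<forall>i<n. P i) \<longleftrightarrow> list_all P [0..<n]"
  by (auto simp: list_all_iff)

lemma sum_lessThan_eq_sum_list: "(\<Sum>i<n. f i) = sum_list (map f [0..<n])"
  by (metis atLeast0LessThan atLeastLessThan_upt sum_set_upt_conv_sum_list_nat)

fun decimal_value :: "nat list \<Rightarrow> int" where
  "decimal_value [] = 0"
| "decimal_value (d # ds) = int d + 10 * decimal_value ds"

lemma decimal_value_nonneg: "0 \<le> decimal_value ds"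
  by (induction ds) auto

lemma decimal_value_digit:
  assumes "\<forall>d\<in>set ds. d < 10"
  shows "(decimal_value ds div 10 ^ k) mod 10 = (if k < length ds then int (ds ! k) else 0)"
  using assms
proof (induction ds arbitrary: k)
  case Nil
  then show ?case by simp
next
  case (Cons d ds)
  have d: "int d < 10" using Cons.prems by simp
  show ?case
  proof (cases k)
    case 0
    then show ?thesis using d by simp
  next
    case (Suc k')
    have "(int d + 10 * decimal_value ds) div 10 = decimal_value ds" using d by simp
    then have "decimal_value (d # ds) div 10 ^ k = decimal_value ds div 10 ^ k'"
      using Suc by (simp add: zdiv_zmult2_eq)
    then show ?thesis using Cons Suc by simp
  qed
qed

lemma decimal_value_inj:
  assumes "length ds = length es" "\<forall>d\<in>set ds. d < 10" "\<forall>e\<in>set es. e < 10"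
    and "decimal_value ds = decimal_value es"
  shows "ds = es"
proof (rule nth_equalityI)
  show "length ds = length es" by (fact assms(1))
  fix k assume "k < length ds"
  then have "int (ds ! k) = int (es ! k)"
    using decimal_value_digit[OF assms(2), of k] decimal_value_digit[OF assms(3), of k] assms(1,4)
    by simp
  then show "ds ! k = es ! k" by simp
qed

lemma digits_012_decimal_value:
  assumes "\<forall>d\<in>set ds. d \<le> 2"
  shows "digits_012 (decimal_value ds)"
  unfolding digits_012_def
proof (intro conjI allI)
  show "0 \<le> decimal_value ds" by (rule decimal_value_nonneg)
  fix k
  have "\<forall>d\<in>set ds. d < 10" using assms by auto
  then have digit: "(decimal_value ds div 10 ^ k) mod 10 = (if k < length ds then int (ds ! k) else 0)"
    by (rule decimal_value_digit)
  show "(decimal_value ds div 10 ^ k) mod 10 \<in> {0, 1, 2}"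
  proof (cases "k < length ds")
    case True
    then have "ds ! k \<le> 2" using assms by simp
    then have "int (ds ! k) \<in> {0, 1, 2}" by auto
    then show ?thesis using digit True by simp
  qed (use digit in simp)
qed

lemma certified_entries:
  fixes A :: "nat \<Rightarrow> nat \<Rightarrow> int" and D :: "nat \<Rightarrow> nat \<Rightarrow> nat list"
    and decode :: "nat list \<Rightarrow> nat \<times> nat"
  assumes entry_value: "\<forall>i<n. \<forall>j<n. A i j = decimal_value (D i j)"
    and expansion: "\<forall>i<n. \<forall>j<n. length (D i j) = L \<and> (\<forall>d\<in>set (D i j). d \<le> 2)"
    and decodes: "\<forall>i<n. \<forall>j<n. decode (D i j) = (i, j)"
  shows "distinct_entries n A \<and> (\<forall>i<n. \<forall>j<n. digits_012 (A i j))"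
proof
  show "distinct_entries n A"
    unfolding distinct_entries_def
  proof (rule inj_onI, clarsimp)
    fix i j i' j'
    assume ij: "i < n" "j < n" "i' < n" "j' < n" and eq: "A i j = A i' j'"
    have "D i j = D i' j'"
    proof (rule decimal_value_inj)
      show "length (D i j) = length (D i' j')" using expansion ij by simp
      show "\<forall>d\<in>set (D i j). d < 10" "\<forall>d\<in>set (D i' j'). d < 10"
        using expansion ij by fastforce+
      show "decimal_value (D i j) = decimal_value (D i' j')" using entry_value ij eq by simp
    qed
    then show "i = i' \<and> j = j'" using decodes ij by (metis prod.inject)
  qed
  show "\<forall>i<n. \<forall>j<n. digits_012 (A i j)"
    using entry_value expansion digits_012_decimal_value by simp
qed

text \<open>Consecutive digit pairs of an expansion encode symbols through a
  lookup table indexed by 3 * first digit + second digit; the coordinates are then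
  linear forms in the symbols modulo p, read as base-b numerals.\<close>

definition pair_symbol :: "nat list \<Rightarrow> nat list \<Rightarrow> nat \<Rightarrow> nat" where
  "pair_symbol table ds m = table ! (3 * ds ! (2 * m) + ds ! (2 * m + 1))"

definition linear_mod :: "nat \<Rightarrow> nat list list \<Rightarrow> nat list \<Rightarrow> nat list" where
  "linear_mod p R v = map (\<lambda>r. (\<Sum>(a, b)\<leftarrow>zip r v. a * b) mod p) R"

definition from_digits :: "nat \<Rightarrow> nat list \<Rightarrow> nat" where
  "from_digits b ds = foldr (\<lambda>d acc. d + b * acc) ds 0"

text \<open>Order 16: the pairs 02, 12, 20, 21 encode 0..3, i.e. two bits each; row and
  column are GF(2)-linear images of the resulting eight bits.\<close>

definition decode16 :: "nat list \<Rightarrow> nat \<times> nat" where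
  "decode16 ds =
    (let bits = concat (map (\<lambda>m. let h = pair_symbol [0, 0, 0, 0, 0, 1, 2, 3, 0] ds m
                                in [h div 2, h mod 2]) [0..<4])
     in (from_digits 2 (linear_mod 2 [[0, 1, 1, 1, 0, 0, 1, 0], [0, 1, 0, 1, 1, 0, 0, 0],
                                      [1, 1, 0, 1, 0, 1, 1, 0], [0, 1, 1, 0, 1, 1, 1, 1]] bits),
         from_digits 2 (linear_mod 2 [[0, 0, 1, 1, 0, 1, 0, 1], [0, 1, 0, 0, 1, 1, 0, 1],
                                      [1, 0, 1, 1, 1, 1, 1, 1], [1, 1, 0, 1, 1, 0, 0, 1]] bits)))"

text \<open>Order 25: the pairs 00, 01, 10, 12, 21 encode the elements 0..4 of GF(5); row and
  column are GF(5)-linear images of the resulting four symbols.\<close>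

definition decode25 :: "nat list \<Rightarrow> nat \<times> nat" where
  "decode25 ds =
    (let y = map (pair_symbol [0, 1, 0, 2, 0, 3, 0, 4, 0] ds) [0..<4]
     in (from_digits 5 (linear_mod 5 [[3, 0, 1, 2], [4, 2, 2, 3]] y),
         from_digits 5 (linear_mod 5 [[4, 0, 3, 4], [3, 1, 4, 4]] y)))"

definition array_of :: "'a list list \<Rightarrow> nat \<Rightarrow> nat \<Rightarrow> 'a" where
  "array_of M i j = M ! i ! j"

lemma map_map_eq_grid:
  assumes eq: "map (map f) M = map (\<lambda>i. map (g i) [0..<n]) [0..<n]"
  shows "length M = n" and "\<forall>i<n. length (M ! i) = n \<and> (\<forall>j<n. f (M ! i ! j) = g i j)"
proof -
  show len: "length M = n" using arg_cong[OF eq, of length] by simp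
  show "\<forall>i<n. length (M ! i) = n \<and> (\<forall>j<n. f (M ! i ! j) = g i j)"
  proof (intro allI impI)
    fix i assume "i < n"
    then have row: "map f (M ! i) = map (g i) [0..<n]"
      using arg_cong[OF eq, of "\<lambda>xs. xs ! i"] len by simp
    have "length (map f (M ! i)) = n" unfolding row by simp
    then have row_len: "length (M ! i) = n" by simp
    have "f (M ! i ! j) = g i j" if "j < n" for j
      using arg_cong[OF row, of "\<lambda>xs. xs ! j"] row_len that by simp
    with row_len show "length (M ! i) = n \<and> (\<forall>j<n. f (M ! i ! j) = g i j)" by simp
  qed
qed

text \<open>The certificate conditions of certified_entries for an array given by its rows,
  phrased as list equations whose evaluation is linear in the size of the data.\<close>

lemma certified_entries_lists:
  assumes entry_values: "map (map decimal_value) DS = M"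
    and expansions: "list_all (list_all (\<lambda>ds. length ds = L \<and> list_all (\<lambda>d. d \<le> 2) ds)) DS"
    and positions: "map (map decode) DS = map (\<lambda>i. map (\<lambda>j. (i, j)) [0..<n]) [0..<n]"
  shows "distinct_entries n (array_of M) \<and> (\<forall>i<n. \<forall>j<n. digits_012 (array_of M i j))"
proof (rule certified_entries[where D = "array_of DS" and decode = decode])
  have len: "length DS = n"
    and rows: "\<forall>i<n. length (DS ! i) = n \<and> (\<forall>j<n. decode (DS ! i ! j) = (i, j))"
    using map_map_eq_grid[OF positions] by simp_all
  show "\<forall>i<n. \<forall>j<n. array_of M i j = decimal_value (array_of DS i j)"
    unfolding array_of_def entry_values[symmetric] using len rows by simp
  show "\<forall>i<n. \<forall>j<n. length (array_of DS i j) = L \<and> (\<forall>d\<in>set (array_of DS i j). d \<le> 2)"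
    unfolding array_of_def
  proof (intro allI impI)
    fix i j assume "i < n" "j < n"
    then have "DS ! i \<in> set DS" "DS ! i ! j \<in> set (DS ! i)" using len rows by simp_all
    then show "length (DS ! i ! j) = L \<and> (\<forall>d\<in>set (DS ! i ! j). d \<le> 2)"
      using expansions by (auto simp: list_all_iff)
  qed
  show "\<forall>i<n. \<forall>j<n. decode (array_of DS i j) = (i, j)"
    unfolding array_of_def using rows by simp
qed

definition square16 :: "int list list" where
  "square16 = [[20202020, 2211221, 21020212, 12122102, 21212002, 12201212, 20120221, 2022120, 21202121, 12210220, 20021202, 2122012, 20212112, 2200202, 21121220, 12022021],
  [21022102, 12120212, 20201221, 2212020, 20122120, 2020221, 21211212, 12202002, 20022012, 2121202, 21200220, 12212121, 21122021, 12021220, 20210202, 2202112],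
  [12121221, 21022020, 2212102, 20200212, 2021212, 20122002, 12202120, 21210221, 2120220, 20022121, 12212012, 21201202, 12020202, 21122112, 2202021, 20211220],
  [2210212, 20202102, 12122020, 21021221, 12200221, 21212120, 2022002, 20121212, 12211202, 21202012, 2122121, 20020220, 2201220, 20212021, 12022112, 21120202],
  [20212121, 2200220, 21121202, 12022012, 21202112, 12210202, 20021220, 2122021, 21212020, 12201221, 20120212, 2022102, 20202002, 2211212, 21020221, 12122120],
  [21122012, 12021202, 20210220, 2202121, 20022021, 2121220, 21200202, 12212112, 20122102, 2020212, 21211221, 12202020, 21022120, 12120221, 20201212, 2212002],
  [12020220, 21122121, 2202012, 20211202, 2120202, 20022112, 12212021, 21201220, 2021221, 20122020, 12202102, 21210212, 12121212, 21022002, 2212120, 20200221],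
  [2201202, 20212012, 12022121, 21120220, 12211220, 21202021, 2122112, 20020202, 12200212, 21212102, 2022020, 20121221, 2210221, 20202120, 12122002, 21021212],
  [2022021, 20121220, 12200202, 21212112, 12122012, 21021202, 2210220, 20202121, 12022120, 21120221, 2201212, 20212002, 2122102, 20020212, 12211221, 21202020],
  [12202112, 21210202, 2021220, 20122021, 2212121, 20200220, 12121202, 21022012, 2202002, 20211212, 12020221, 21122120, 12212020, 21201221, 2120212, 20022102],
  [21211220, 12202021, 20122112, 2020202, 20201202, 2212012, 21022121, 12120220, 20210221, 2202120, 21122002, 12021212, 21200212, 12212102, 20022020, 2121221],
  [20120202, 2022112, 21212021, 12201220, 21020220, 12122121, 20202012, 2211202, 21121212, 12022002, 20212120, 2200221, 20021221, 2122020, 21202102, 12210212],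
  [2122120, 20020221, 12211212, 21202002, 12022102, 21120212, 2201221, 20212020, 12122021, 21021220, 2210202, 20202112, 2022012, 20121202, 12200220, 21212121],
  [12212002, 21201212, 2120221, 20022120, 2202020, 20211221, 12020212, 21122102, 2212112, 20200202, 12121220, 21022021, 12202121, 21210220, 2021202, 20122012],
  [21200221, 12212120, 20022002, 2121212, 20210212, 2202102, 21122020, 12021221, 20201220, 2212021, 21022112, 12120202, 21211202, 12202012, 20122121, 2020220],
  [20021212, 2122002, 21202120, 12210221, 21121221, 12022020, 20212102, 2200212, 21020202, 12122112, 20202021, 2211220, 20120220, 2022121, 21212012, 12201202]]"

definition digits16 :: "nat list list list" where
  "digits16 = [[[0,2,0,2,0,2,0,2], [1,2,2,1,1,2,2,0], [2,1,2,0,2,0,1,2], [2,0,1,2,2,1,2,1], [2,0,0,2,1,2,1,2], [2,1,2,1,0,2,2,1], [1,2,2,0,2,1,0,2], [0,2,1,2,2,0,2,0], [1,2,1,2,0,2,1,2], [0,2,2,0,1,2,2,1], [2,0,2,1,2,0,0,2], [2,1,0,2,2,1,2,0], [2,1,1,2,1,2,0,2], [2,0,2,0,0,2,2,0], [0,2,2,1,2,1,1,2], [1,2,0,2,2,0,2,1]],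
  [[2,0,1,2,2,0,1,2], [2,1,2,0,2,1,2,1], [1,2,2,1,0,2,0,2], [0,2,0,2,1,2,2,0], [0,2,1,2,2,1,0,2], [1,2,2,0,2,0,2,0], [2,1,2,1,1,2,1,2], [2,0,0,2,0,2,2,1], [2,1,0,2,2,0,0,2], [2,0,2,1,2,1,2,0], [0,2,2,0,0,2,1,2], [1,2,1,2,1,2,2,1], [1,2,0,2,2,1,1,2], [0,2,2,1,2,0,2,1], [2,0,2,0,1,2,0,2], [2,1,1,2,0,2,2,0]],
  [[1,2,2,1,2,1,2,1], [0,2,0,2,2,0,1,2], [2,0,1,2,1,2,2,0], [2,1,2,0,0,2,0,2], [2,1,2,1,2,0,2,0], [2,0,0,2,2,1,0,2], [0,2,1,2,0,2,2,1], [1,2,2,0,1,2,1,2], [0,2,2,0,2,1,2,0], [1,2,1,2,2,0,0,2], [2,1,0,2,1,2,2,1], [2,0,2,1,0,2,1,2], [2,0,2,0,2,0,2,1], [2,1,1,2,2,1,1,2], [1,2,0,2,0,2,2,0], [0,2,2,1,1,2,0,2]],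
  [[2,1,2,0,1,2,2,0], [2,0,1,2,0,2,0,2], [0,2,0,2,2,1,2,1], [1,2,2,1,2,0,1,2], [1,2,2,0,0,2,2,1], [0,2,1,2,1,2,1,2], [2,0,0,2,2,0,2,0], [2,1,2,1,2,1,0,2], [2,0,2,1,1,2,2,1], [2,1,0,2,0,2,1,2], [1,2,1,2,2,1,2,0], [0,2,2,0,2,0,0,2], [0,2,2,1,0,2,2,0], [1,2,0,2,1,2,0,2], [2,1,1,2,2,0,2,1], [2,0,2,0,2,1,1,2]],
  [[1,2,1,2,1,2,0,2], [0,2,2,0,0,2,2,0], [2,0,2,1,2,1,1,2], [2,1,0,2,2,0,2,1], [2,1,1,2,0,2,1,2], [2,0,2,0,1,2,2,1], [0,2,2,1,2,0,0,2], [1,2,0,2,2,1,2,0], [0,2,0,2,1,2,1,2], [1,2,2,1,0,2,2,1], [2,1,2,0,2,1,0,2], [2,0,1,2,2,0,2,0], [2,0,0,2,0,2,0,2], [2,1,2,1,1,2,2,0], [1,2,2,0,2,0,1,2], [0,2,1,2,2,1,2,1]],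
  [[2,1,0,2,2,1,1,2], [2,0,2,1,2,0,2,1], [0,2,2,0,1,2,0,2], [1,2,1,2,0,2,2,0], [1,2,0,2,2,0,0,2], [0,2,2,1,2,1,2,0], [2,0,2,0,0,2,1,2], [2,1,1,2,1,2,2,1], [2,0,1,2,2,1,0,2], [2,1,2,0,2,0,2,0], [1,2,2,1,1,2,1,2], [0,2,0,2,0,2,2,1], [0,2,1,2,2,0,1,2], [1,2,2,0,2,1,2,1], [2,1,2,1,0,2,0,2], [2,0,0,2,1,2,2,0]],
  [[0,2,2,0,2,0,2,1], [1,2,1,2,2,1,1,2], [2,1,0,2,0,2,2,0], [2,0,2,1,1,2,0,2], [2,0,2,0,2,1,2,0], [2,1,1,2,2,0,0,2], [1,2,0,2,1,2,2,1], [0,2,2,1,0,2,1,2], [1,2,2,1,2,0,2,0], [0,2,0,2,2,1,0,2], [2,0,1,2,0,2,2,1], [2,1,2,0,1,2,1,2], [2,1,2,1,2,1,2,1], [2,0,0,2,2,0,1,2], [0,2,1,2,1,2,2,0], [1,2,2,0,0,2,0,2]],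
  [[2,0,2,1,0,2,2,0], [2,1,0,2,1,2,0,2], [1,2,1,2,2,0,2,1], [0,2,2,0,2,1,1,2], [0,2,2,1,1,2,2,1], [1,2,0,2,0,2,1,2], [2,1,1,2,2,1,2,0], [2,0,2,0,2,0,0,2], [2,1,2,0,0,2,2,1], [2,0,1,2,1,2,1,2], [0,2,0,2,2,0,2,0], [1,2,2,1,2,1,0,2], [1,2,2,0,1,2,2,0], [0,2,1,2,0,2,0,2], [2,0,0,2,2,1,2,1], [2,1,2,1,2,0,1,2]],
  [[1,2,0,2,2,0,2,0], [0,2,2,1,2,1,0,2], [2,0,2,0,0,2,2,1], [2,1,1,2,1,2,1,2], [2,1,0,2,2,1,2,1], [2,0,2,1,2,0,1,2], [0,2,2,0,1,2,2,0], [1,2,1,2,0,2,0,2], [0,2,1,2,2,0,2,1], [1,2,2,0,2,1,1,2], [2,1,2,1,0,2,2,0], [2,0,0,2,1,2,0,2], [2,0,1,2,2,1,2,0], [2,1,2,0,2,0,0,2], [1,2,2,1,1,2,2,1], [0,2,0,2,0,2,1,2]],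
  [[2,1,1,2,0,2,2,1], [2,0,2,0,1,2,1,2], [0,2,2,1,2,0,2,0], [1,2,0,2,2,1,0,2], [1,2,1,2,1,2,2,0], [0,2,2,0,0,2,0,2], [2,0,2,1,2,1,2,1], [2,1,0,2,2,0,1,2], [2,0,0,2,0,2,2,0], [2,1,2,1,1,2,0,2], [1,2,2,0,2,0,2,1], [0,2,1,2,2,1,1,2], [0,2,0,2,1,2,2,1], [1,2,2,1,0,2,1,2], [2,1,2,0,2,1,2,0], [2,0,1,2,2,0,0,2]],
  [[0,2,2,1,1,2,1,2], [1,2,0,2,0,2,2,1], [2,1,1,2,2,1,0,2], [2,0,2,0,2,0,2,0], [2,0,2,1,0,2,0,2], [2,1,0,2,1,2,2,0], [1,2,1,2,2,0,1,2], [0,2,2,0,2,1,2,1], [1,2,2,0,1,2,0,2], [0,2,1,2,0,2,2,0], [2,0,0,2,2,1,1,2], [2,1,2,1,2,0,2,1], [2,1,2,0,0,2,1,2], [2,0,1,2,1,2,2,1], [0,2,0,2,2,0,0,2], [1,2,2,1,2,1,2,0]],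
  [[2,0,2,0,2,1,0,2], [2,1,1,2,2,0,2,0], [1,2,0,2,1,2,1,2], [0,2,2,1,0,2,2,1], [0,2,2,0,2,0,1,2], [1,2,1,2,2,1,2,1], [2,1,0,2,0,2,0,2], [2,0,2,1,1,2,2,0], [2,1,2,1,2,1,1,2], [2,0,0,2,2,0,2,1], [0,2,1,2,1,2,0,2], [1,2,2,0,0,2,2,0], [1,2,2,1,2,0,0,2], [0,2,0,2,2,1,2,0], [2,0,1,2,0,2,1,2], [2,1,2,0,1,2,2,1]],
  [[0,2,1,2,2,1,2,0], [1,2,2,0,2,0,0,2], [2,1,2,1,1,2,2,1], [2,0,0,2,0,2,1,2], [2,0,1,2,2,0,2,1], [2,1,2,0,2,1,1,2], [1,2,2,1,0,2,2,0], [0,2,0,2,1,2,0,2], [1,2,0,2,2,1,2,1], [0,2,2,1,2,0,1,2], [2,0,2,0,1,2,2,0], [2,1,1,2,0,2,0,2], [2,1,0,2,2,0,2,0], [2,0,2,1,2,1,0,2], [0,2,2,0,0,2,2,1], [1,2,1,2,1,2,1,2]],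
  [[2,0,0,2,1,2,2,1], [2,1,2,1,0,2,1,2], [1,2,2,0,2,1,2,0], [0,2,1,2,2,0,0,2], [0,2,0,2,0,2,2,0], [1,2,2,1,1,2,0,2], [2,1,2,0,2,0,2,1], [2,0,1,2,2,1,1,2], [2,1,1,2,1,2,2,0], [2,0,2,0,0,2,0,2], [0,2,2,1,2,1,2,1], [1,2,0,2,2,0,1,2], [1,2,1,2,0,2,2,1], [0,2,2,0,1,2,1,2], [2,0,2,1,2,0,2,0], [2,1,0,2,2,1,0,2]],
  [[1,2,2,0,0,2,1,2], [0,2,1,2,1,2,2,1], [2,0,0,2,2,0,0,2], [2,1,2,1,2,1,2,0], [2,1,2,0,1,2,0,2], [2,0,1,2,0,2,2,0], [0,2,0,2,2,1,1,2], [1,2,2,1,2,0,2,1], [0,2,2,1,0,2,0,2], [1,2,0,2,1,2,2,0], [2,1,1,2,2,0,1,2], [2,0,2,0,2,1,2,1], [2,0,2,1,1,2,1,2], [2,1,0,2,0,2,2,1], [1,2,1,2,2,1,0,2], [0,2,2,0,2,0,2,0]],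
  [[2,1,2,1,2,0,0,2], [2,0,0,2,2,1,2,0], [0,2,1,2,0,2,1,2], [1,2,2,0,1,2,2,1], [1,2,2,1,2,1,1,2], [0,2,0,2,2,0,2,1], [2,0,1,2,1,2,0,2], [2,1,2,0,0,2,2,0], [2,0,2,0,2,0,1,2], [2,1,1,2,2,1,2,1], [1,2,0,2,0,2,0,2], [0,2,2,1,1,2,2,0], [0,2,2,0,2,1,0,2], [1,2,1,2,2,0,2,0], [2,1,0,2,1,2,1,2], [2,0,2,1,0,2,2,1]]]"

definition square25 :: "int list list" where
  "square25 = [[0, 1210110, 12101201, 10121021, 21012112, 102121, 1120012, 12010100, 10001210, 21211001, 11010, 1002101, 12210021, 10100112, 21121200, 211212, 1101000, 12122110, 10010001, 21000121, 120101, 1011221, 12001012, 10212100, 21100010],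
  [12121221, 10011012, 21002100, 210010, 1100101, 12000110, 10211201, 21101021, 122112, 1010000, 12100012, 10120100, 21011210, 1001, 1212121, 12012101, 10000021, 21210112, 101200, 1121010, 12211000, 10102110, 21120001, 10121, 1001212],
  [21212110, 100001, 1120121, 12011212, 10001000, 21121012, 12100, 1000010, 12210101, 10101221, 21001201, 211021, 1102112, 12120000, 10010110, 21100100, 121210, 1011001, 12002121, 10210012, 21010021, 112, 1211200, 12101010, 10122101],
  [1010112, 12001200, 10211010, 21102101, 120021, 1210001, 12100121, 10121212, 21011000, 2110, 1122100, 12010010, 10000101, 21211221, 101012, 1001021, 12212112, 10100000, 21120110, 11201, 1101210, 12121001, 10012121, 21000012, 210100],
  [10101001, 21122121, 10012, 1000100, 12211210, 10011200, 21001010, 212101, 1100021, 12120112, 10210121, 21101212, 121000, 1012110, 12000001, 10120010, 21010101, 1221, 1211012, 12102100, 10002112, 21210000, 100110, 1121201, 12011021],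
  [11210, 1001001, 12212121, 10100012, 21120100, 210112, 1101200, 12121010, 10012101, 21000021, 120001, 1010121, 12001212, 10211000, 21102110, 2100, 1210010, 12100101, 10121221, 21011012, 101021, 1122112, 12010000, 10000110, 21211201],
  [12102112, 10120000, 21010110, 1201, 1211021, 12011001, 10002121, 21210012, 100100, 1121210, 12211200, 10101010, 21122101, 10021, 1000112, 12120121, 10011212, 21001000, 212110, 1100001, 12000010, 10210101, 21101221, 121012, 1012100],
  [21000101, 211221, 1101012, 12122100, 10010010, 21100000, 120110, 1011201, 12001021, 10212112, 21012121, 12, 1210100, 12101210, 10121001, 21211010, 102101, 1120021, 12010112, 10001200, 21121212, 11000, 1002110, 12210001, 10100121],
  [1121000, 12012110, 10000001, 21210121, 101212, 1001221, 12211012, 10102100, 21120010, 10101, 1100110, 12121201, 10011021, 21002112, 210000, 1010012, 12000100, 10211210, 21101001, 122121, 1212101, 12100021, 10120112, 21011200, 1010],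
  [10210021, 21100112, 121200, 1011010, 12002101, 10122110, 21010001, 121, 1211212, 12101000, 10001012, 21212100, 100010, 1120101, 12011221, 10101201, 21121021, 12112, 1000000, 12210110, 10010100, 21001210, 211001, 1102121, 12120012],
  [122101, 1010021, 12000112, 10211200, 21101010, 1000, 1212110, 12100001, 10120121, 21011212, 101221, 1121012, 12012100, 10000010, 21210101, 10110, 1001201, 12211021, 10102112, 21120000, 210012, 1100100, 12121210, 10011001, 21002121],
  [12210100, 10101210, 21121001, 12121, 1000012, 12120021, 10010112, 21001200, 211010, 1102101, 12002110, 10210001, 21100121, 121212, 1011000, 12101012, 10122100, 21010010, 101, 1211221, 12011201, 10001021, 21212112, 100000, 1120110],
  [21011021, 2112, 1210000, 12100110, 10121201, 21211210, 101001, 1122121, 12010012, 10000100, 21120112, 11200, 1001010, 12212101, 10100021, 21000001, 210121, 1101212, 12121000, 10012110, 21102100, 120010, 1010101, 12001221, 10211012],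
  [1100010, 12120101, 10011221, 21001012, 212100, 1012112, 12000000, 10210110, 21101201, 121021, 1211001, 12102121, 10120012, 21010100, 1210, 1121200, 12011010, 10002101, 21210021, 100112, 1000121, 12211212, 10101000, 21122110, 10001],
  [10001212, 21211000, 102110, 1120001, 12010121, 10100101, 21121221, 11012, 1002100, 12210010, 10010000, 21000110, 211201, 1101021, 12122112, 10212121, 21100012, 120100, 1011210, 12001001, 10121010, 21012101, 21, 1210112, 12101200],
  [100121, 1121212, 12011000, 10002110, 21210001, 10010, 1000101, 12211221, 10101012, 21122100, 212112, 1100000, 12120110, 10011201, 21001021, 121001, 1012121, 12000012, 10210100, 21101210, 1200, 1211010, 12102101, 10120021, 21010112],
  [12001010, 10212101, 21100021, 120112, 1011200, 12101212, 10121000, 21012110, 1, 1210121, 12010101, 10001221, 21211012, 102100, 1120010, 12210000, 10100110, 21121201, 11021, 1002112, 12122121, 10010012, 21000100, 211210, 1101001],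
  [21120012, 10100, 1001210, 12211001, 10102121, 21002101, 210021, 1100112, 12121200, 10011010, 21101000, 122110, 1010001, 12000121, 10211212, 21011221, 1012, 1212100, 12100010, 10120101, 21210110, 101201, 1121021, 12012112, 10000000],
  [1211201, 12101021, 10122112, 21010000, 110, 1120100, 12011210, 10001001, 21212121, 100012, 1000021, 12210112, 10101200, 21121010, 12101, 1102110, 12120001, 10010121, 21001212, 211000, 1011012, 12002100, 10210010, 21100101, 121221],
  [10012100, 21000010, 210101, 1101221, 12121012, 10211021, 21102112, 120000, 1010110, 12001201, 10121210, 21011001, 2121, 1210012, 12100100, 10000112, 21211200, 101010, 1122101, 12010021, 10100001, 21120121, 11212, 1001000, 12212110],
  [211012, 1102100, 12120010, 10010101, 21001221, 121201, 1011021, 12002112, 10210000, 21100110, 100, 1211210, 12101001, 10122121, 21010012, 100021, 1120112, 12011200, 10001010, 21212101, 12110, 1000001, 12210121, 10101212, 21121000],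
  [12010001, 10000121, 21211212, 101000, 1122110, 12212100, 10100010, 21120101, 11221, 1001012, 12121021, 10012112, 21000000, 210110, 1101201, 12001210, 10211001, 21102121, 120012, 1010100, 12100112, 10121200, 21011010, 2101, 1210021],
  [21101200, 121010, 1012101, 12000021, 10210112, 21010121, 1212, 1211000, 12102110, 10120001, 21210010, 100101, 1121221, 12011012, 10002100, 21122112, 10000, 1000110, 12211201, 10101021, 21001001, 212121, 1100012, 12120100, 10011210],
  [1002121, 12210012, 10100100, 21121210, 11001, 1101010, 12122101, 10010021, 21000112, 211200, 1011212, 12001000, 10212110, 21100001, 120121, 1210101, 12101221, 10121012, 21012100, 10, 1120000, 12010110, 10001201, 21211021, 102112],
  [10120110, 21011201, 1021, 1212112, 12100000, 10000012, 21210100, 101210, 1121001, 12012121, 10102101, 21120021, 10112, 1001200, 12211010, 10011000, 21002110, 210001, 1100121, 12121212, 10211221, 21101012, 122100, 1010010, 12000101]]"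

definition digits25 :: "nat list list list" where
  "digits25 = [[[0,0,0,0,0,0,0,0], [0,1,1,0,1,2,1,0], [1,0,2,1,0,1,2,1], [1,2,0,1,2,1,0,1], [2,1,1,2,1,0,1,2], [1,2,1,2,0,1,0,0], [2,1,0,0,2,1,1,0], [0,0,1,0,1,0,2,1], [0,1,2,1,0,0,0,1], [1,0,0,1,1,2,1,2], [0,1,0,1,1,0,0,0], [1,0,1,2,0,0,1,0], [1,2,0,0,1,2,2,1], [2,1,1,0,0,1,0,1], [0,0,2,1,2,1,1,2], [2,1,2,1,1,2,0,0], [0,0,0,1,0,1,1,0], [0,1,1,2,2,1,2,1], [1,0,0,0,1,0,0,1], [1,2,1,0,0,0,1,2], [1,0,1,0,2,1,0,0], [1,2,2,1,1,0,1,0], [2,1,0,1,0,0,2,1], [0,0,1,2,1,2,0,1], [0,1,0,0,0,1,1,2]],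
  [[1,2,2,1,2,1,2,1], [2,1,0,1,1,0,0,1], [0,0,1,2,0,0,1,2], [0,1,0,0,1,2,0,0], [1,0,1,0,0,1,1,0], [0,1,1,0,0,0,2,1], [1,0,2,1,1,2,0,1], [1,2,0,1,0,1,1,2], [2,1,1,2,2,1,0,0], [0,0,0,0,1,0,1,0], [2,1,0,0,0,1,2,1], [0,0,1,0,2,1,0,1], [0,1,2,1,1,0,1,2], [1,0,0,1,0,0,0,0], [1,2,1,2,1,2,1,0], [1,0,1,2,1,0,2,1], [1,2,0,0,0,0,0,1], [2,1,1,0,1,2,1,2], [0,0,2,1,0,1,0,0], [0,1,0,1,2,1,1,0], [0,0,0,1,1,2,2,1], [0,1,1,2,0,1,0,1], [1,0,0,0,2,1,1,2], [1,2,1,0,1,0,0,0], [2,1,2,1,0,0,1,0]],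
  [[0,1,1,2,1,2,1,2], [1,0,0,0,0,1,0,0], [1,2,1,0,2,1,1,0], [2,1,2,1,1,0,2,1], [0,0,0,1,0,0,0,1], [2,1,0,1,2,1,1,2], [0,0,1,2,1,0,0,0], [0,1,0,0,0,0,1,0], [1,0,1,0,1,2,2,1], [1,2,2,1,0,1,0,1], [1,0,2,1,0,0,1,2], [1,2,0,1,1,2,0,0], [2,1,1,2,0,1,1,0], [0,0,0,0,2,1,2,1], [0,1,1,0,1,0,0,1], [0,0,1,0,0,1,1,2], [0,1,2,1,2,1,0,0], [1,0,0,1,1,0,1,0], [1,2,1,2,0,0,2,1], [2,1,0,0,1,2,0,1], [1,2,0,0,1,0,1,2], [2,1,1,0,0,0,0,0], [0,0,2,1,1,2,1,0], [0,1,0,1,0,1,2,1], [1,0,1,2,2,1,0,1]],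
  [[2,1,1,0,1,0,1,0], [0,0,2,1,0,0,2,1], [0,1,0,1,1,2,0,1], [1,0,1,2,0,1,1,2], [1,2,0,0,2,1,0,0], [1,0,0,0,1,2,1,0], [1,2,1,0,0,1,2,1], [2,1,2,1,2,1,0,1], [0,0,0,1,1,0,1,2], [0,1,1,2,0,0,0,0], [0,0,1,2,2,1,1,0], [0,1,0,0,1,0,2,1], [1,0,1,0,0,0,0,1], [1,2,2,1,1,2,1,2], [2,1,0,1,0,1,0,0], [1,2,0,1,0,0,1,0], [2,1,1,2,1,2,2,1], [0,0,0,0,0,1,0,1], [0,1,1,0,2,1,1,2], [1,0,2,1,1,0,0,0], [0,1,2,1,0,1,1,0], [1,0,0,1,2,1,2,1], [1,2,1,2,1,0,0,1], [2,1,0,0,0,0,1,2], [0,0,1,0,1,2,0,0]],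
  [[1,0,0,1,0,1,0,1], [1,2,1,2,2,1,1,2], [2,1,0,0,1,0,0,0], [0,0,1,0,0,0,1,0], [0,1,2,1,1,2,2,1], [0,0,2,1,1,0,0,1], [0,1,0,1,0,0,1,2], [1,0,1,2,1,2,0,0], [1,2,0,0,0,1,1,0], [2,1,1,0,2,1,2,1], [1,2,1,0,1,2,0,1], [2,1,2,1,0,1,1,2], [0,0,0,1,2,1,0,0], [0,1,1,2,1,0,1,0], [1,0,0,0,0,0,2,1], [0,1,0,0,2,1,0,1], [1,0,1,0,1,0,1,2], [1,2,2,1,0,0,0,0], [2,1,0,1,1,2,1,0], [0,0,1,2,0,1,2,1], [2,1,1,2,0,0,0,1], [0,0,0,0,1,2,1,2], [0,1,1,0,0,1,0,0], [1,0,2,1,2,1,1,0], [1,2,0,1,1,0,2,1]],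
  [[0,1,2,1,1,0,0,0], [1,0,0,1,0,0,1,0], [1,2,1,2,1,2,2,1], [2,1,0,0,0,1,0,1], [0,0,1,0,2,1,1,2], [2,1,1,0,1,2,0,0], [0,0,2,1,0,1,1,0], [0,1,0,1,2,1,2,1], [1,0,1,2,1,0,0,1], [1,2,0,0,0,0,1,2], [1,0,0,0,2,1,0,0], [1,2,1,0,1,0,1,0], [2,1,2,1,0,0,2,1], [0,0,0,1,1,2,0,1], [0,1,1,2,0,1,1,2], [0,0,1,2,0,0,0,0], [0,1,0,0,1,2,1,0], [1,0,1,0,0,1,2,1], [1,2,2,1,2,1,0,1], [2,1,0,1,1,0,1,2], [1,2,0,1,0,1,0,0], [2,1,1,2,2,1,1,0], [0,0,0,0,1,0,2,1], [0,1,1,0,0,0,0,1], [1,0,2,1,1,2,1,2]],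
  [[2,1,1,2,0,1,2,1], [0,0,0,0,2,1,0,1], [0,1,1,0,1,0,1,2], [1,0,2,1,0,0,0,0], [1,2,0,1,1,2,1,0], [1,0,0,1,1,0,2,1], [1,2,1,2,0,0,0,1], [2,1,0,0,1,2,1,2], [0,0,1,0,0,1,0,0], [0,1,2,1,2,1,1,0], [0,0,2,1,1,2,2,1], [0,1,0,1,0,1,0,1], [1,0,1,2,2,1,1,2], [1,2,0,0,1,0,0,0], [2,1,1,0,0,0,1,0], [1,2,1,0,2,1,2,1], [2,1,2,1,1,0,0,1], [0,0,0,1,0,0,1,2], [0,1,1,2,1,2,0,0], [1,0,0,0,0,1,1,0], [0,1,0,0,0,0,2,1], [1,0,1,0,1,2,0,1], [1,2,2,1,0,1,1,2], [2,1,0,1,2,1,0,0], [0,0,1,2,1,0,1,0]],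
  [[1,0,1,0,0,0,1,2], [1,2,2,1,1,2,0,0], [2,1,0,1,0,1,1,0], [0,0,1,2,2,1,2,1], [0,1,0,0,1,0,0,1], [0,0,0,0,0,1,1,2], [0,1,1,0,2,1,0,0], [1,0,2,1,1,0,1,0], [1,2,0,1,0,0,2,1], [2,1,1,2,1,2,0,1], [1,2,1,2,1,0,1,2], [2,1,0,0,0,0,0,0], [0,0,1,0,1,2,1,0], [0,1,2,1,0,1,2,1], [1,0,0,1,2,1,0,1], [0,1,0,1,1,2,1,2], [1,0,1,2,0,1,0,0], [1,2,0,0,2,1,1,0], [2,1,1,0,1,0,2,1], [0,0,2,1,0,0,0,1], [2,1,2,1,2,1,1,2], [0,0,0,1,1,0,0,0], [0,1,1,2,0,0,1,0], [1,0,0,0,1,2,2,1], [1,2,1,0,0,1,0,1]],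
  [[0,0,0,1,2,1,1,0], [0,1,1,2,1,0,2,1], [1,0,0,0,0,0,0,1], [1,2,1,0,1,2,1,2], [2,1,2,1,0,1,0,0], [1,2,2,1,0,0,1,0], [2,1,0,1,1,2,2,1], [0,0,1,2,0,1,0,1], [0,1,0,0,2,1,1,2], [1,0,1,0,1,0,0,0], [0,1,1,0,0,1,1,0], [1,0,2,1,2,1,2,1], [1,2,0,1,1,0,0,1], [2,1,1,2,0,0,1,2], [0,0,0,0,1,2,0,0], [2,1,0,0,1,0,1,0], [0,0,1,0,0,0,2,1], [0,1,2,1,1,2,0,1], [1,0,0,1,0,1,1,2], [1,2,1,2,2,1,0,0], [1,0,1,2,1,2,1,0], [1,2,0,0,0,1,2,1], [2,1,1,0,2,1,0,1], [0,0,2,1,1,0,1,2], [0,1,0,1,0,0,0,0]],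
  [[1,2,0,0,1,2,0,1], [2,1,1,0,0,1,1,2], [0,0,2,1,2,1,0,0], [0,1,0,1,1,0,1,0], [1,0,1,2,0,0,2,1], [0,1,1,2,2,1,0,1], [1,0,0,0,1,0,1,2], [1,2,1,0,0,0,0,0], [2,1,2,1,1,2,1,0], [0,0,0,1,0,1,2,1], [2,1,0,1,0,0,0,1], [0,0,1,2,1,2,1,2], [0,1,0,0,0,1,0,0], [1,0,1,0,2,1,1,0], [1,2,2,1,1,0,2,1], [1,0,2,1,0,1,0,1], [1,2,0,1,2,1,1,2], [2,1,1,2,1,0,0,0], [0,0,0,0,0,0,1,0], [0,1,1,0,1,2,2,1], [0,0,1,0,1,0,0,1], [0,1,2,1,0,0,1,2], [1,0,0,1,1,2,0,0], [1,2,1,2,0,1,1,0], [2,1,0,0,2,1,2,1]],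
  [[1,0,1,2,2,1,0,0], [1,2,0,0,1,0,1,0], [2,1,1,0,0,0,2,1], [0,0,2,1,1,2,0,1], [0,1,0,1,0,1,1,2], [0,0,0,1,0,0,0,0], [0,1,1,2,1,2,1,0], [1,0,0,0,0,1,2,1], [1,2,1,0,2,1,0,1], [2,1,2,1,1,0,1,2], [1,2,2,1,0,1,0,0], [2,1,0,1,2,1,1,0], [0,0,1,2,1,0,2,1], [0,1,0,0,0,0,0,1], [1,0,1,0,1,2,1,2], [0,1,1,0,1,0,0,0], [1,0,2,1,0,0,1,0], [1,2,0,1,1,2,2,1], [2,1,1,2,0,1,0,1], [0,0,0,0,2,1,1,2], [2,1,0,0,1,2,0,0], [0,0,1,0,0,1,1,0], [0,1,2,1,2,1,2,1], [1,0,0,1,1,0,0,1], [1,2,1,2,0,0,1,2]],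
  [[0,0,1,0,1,2,2,1], [0,1,2,1,0,1,0,1], [1,0,0,1,2,1,1,2], [1,2,1,2,1,0,0,0], [2,1,0,0,0,0,1,0], [1,2,0,0,2,1,2,1], [2,1,1,0,1,0,0,1], [0,0,2,1,0,0,1,2], [0,1,0,1,1,2,0,0], [1,0,1,2,0,1,1,0], [0,1,1,2,0,0,2,1], [1,0,0,0,1,2,0,1], [1,2,1,0,0,1,1,2], [2,1,2,1,2,1,0,0], [0,0,0,1,1,0,1,0], [2,1,0,1,0,1,2,1], [0,0,1,2,2,1,0,1], [0,1,0,0,1,0,1,2], [1,0,1,0,0,0,0,0], [1,2,2,1,1,2,1,0], [1,0,2,1,1,0,2,1], [1,2,0,1,0,0,0,1], [2,1,1,2,1,2,1,2], [0,0,0,0,0,1,0,0], [0,1,1,0,2,1,1,0]],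
  [[1,2,0,1,1,0,1,2], [2,1,1,2,0,0,0,0], [0,0,0,0,1,2,1,0], [0,1,1,0,0,1,2,1], [1,0,2,1,2,1,0,1], [0,1,2,1,1,2,1,2], [1,0,0,1,0,1,0,0], [1,2,1,2,2,1,1,0], [2,1,0,0,1,0,2,1], [0,0,1,0,0,0,0,1], [2,1,1,0,2,1,1,2], [0,0,2,1,1,0,0,0], [0,1,0,1,0,0,1,0], [1,0,1,2,1,2,2,1], [1,2,0,0,0,1,0,1], [1,0,0,0,0,0,1,2], [1,2,1,0,1,2,0,0], [2,1,2,1,0,1,1,0], [0,0,0,1,2,1,2,1], [0,1,1,2,1,0,0,1], [0,0,1,2,0,1,1,2], [0,1,0,0,2,1,0,0], [1,0,1,0,1,0,1,0], [1,2,2,1,0,0,2,1], [2,1,0,1,1,2,0,1]],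
  [[0,1,0,0,0,1,1,0], [1,0,1,0,2,1,2,1], [1,2,2,1,1,0,0,1], [2,1,0,1,0,0,1,2], [0,0,1,2,1,2,0,0], [2,1,1,2,1,0,1,0], [0,0,0,0,0,0,2,1], [0,1,1,0,1,2,0,1], [1,0,2,1,0,1,1,2], [1,2,0,1,2,1,0,0], [1,0,0,1,1,2,1,0], [1,2,1,2,0,1,2,1], [2,1,0,0,2,1,0,1], [0,0,1,0,1,0,1,2], [0,1,2,1,0,0,0,0], [0,0,2,1,2,1,1,0], [0,1,0,1,1,0,2,1], [1,0,1,2,0,0,0,1], [1,2,0,0,1,2,1,2], [2,1,1,0,0,1,0,0], [1,2,1,0,0,0,1,0], [2,1,2,1,1,2,2,1], [0,0,0,1,0,1,0,1], [0,1,1,2,2,1,1,2], [1,0,0,0,1,0,0,0]],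
  [[2,1,2,1,0,0,0,1], [0,0,0,1,1,2,1,2], [0,1,1,2,0,1,0,0], [1,0,0,0,2,1,1,0], [1,2,1,0,1,0,2,1], [1,0,1,0,0,1,0,1], [1,2,2,1,2,1,1,2], [2,1,0,1,1,0,0,0], [0,0,1,2,0,0,1,0], [0,1,0,0,1,2,2,1], [0,0,0,0,1,0,0,1], [0,1,1,0,0,0,1,2], [1,0,2,1,1,2,0,0], [1,2,0,1,0,1,1,0], [2,1,1,2,2,1,2,1], [1,2,1,2,1,2,0,1], [2,1,0,0,0,1,1,2], [0,0,1,0,2,1,0,0], [0,1,2,1,1,0,1,0], [1,0,0,1,0,0,2,1], [0,1,0,1,2,1,0,1], [1,0,1,2,1,0,1,2], [1,2,0,0,0,0,0,0], [2,1,1,0,1,2,1,0], [0,0,2,1,0,1,2,1]],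
  [[1,2,1,0,0,1,0,0], [2,1,2,1,2,1,1,0], [0,0,0,1,1,0,2,1], [0,1,1,2,0,0,0,1], [1,0,0,0,1,2,1,2], [0,1,0,0,1,0,0,0], [1,0,1,0,0,0,1,0], [1,2,2,1,1,2,2,1], [2,1,0,1,0,1,0,1], [0,0,1,2,2,1,1,2], [2,1,1,2,1,2,0,0], [0,0,0,0,0,1,1,0], [0,1,1,0,2,1,2,1], [1,0,2,1,1,0,0,1], [1,2,0,1,0,0,1,2], [1,0,0,1,2,1,0,0], [1,2,1,2,1,0,1,0], [2,1,0,0,0,0,2,1], [0,0,1,0,1,2,0,1], [0,1,2,1,0,1,1,2], [0,0,2,1,0,0,0,0], [0,1,0,1,1,2,1,0], [1,0,1,2,0,1,2,1], [1,2,0,0,2,1,0,1], [2,1,1,0,1,0,1,2]],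
  [[0,1,0,1,0,0,2,1], [1,0,1,2,1,2,0,1], [1,2,0,0,0,1,1,2], [2,1,1,0,2,1,0,0], [0,0,2,1,1,0,1,0], [2,1,2,1,0,1,2,1], [0,0,0,1,2,1,0,1], [0,1,1,2,1,0,1,2], [1,0,0,0,0,0,0,0], [1,2,1,0,1,2,1,0], [1,0,1,0,1,0,2,1], [1,2,2,1,0,0,0,1], [2,1,0,1,1,2,1,2], [0,0,1,2,0,1,0,0], [0,1,0,0,2,1,1,0], [0,0,0,0,1,2,2,1], [0,1,1,0,0,1,0,1], [1,0,2,1,2,1,1,2], [1,2,0,1,1,0,0,0], [2,1,1,2,0,0,1,0], [1,2,1,2,2,1,2,1], [2,1,0,0,1,0,0,1], [0,0,1,0,0,0,1,2], [0,1,2,1,1,2,0,0], [1,0,0,1,0,1,1,0]],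
  [[2,1,0,0,2,1,1,2], [0,0,1,0,1,0,0,0], [0,1,2,1,0,0,1,0], [1,0,0,1,1,2,2,1], [1,2,1,2,0,1,0,1], [1,0,1,2,0,0,1,2], [1,2,0,0,1,2,0,0], [2,1,1,0,0,1,1,0], [0,0,2,1,2,1,2,1], [0,1,0,1,1,0,0,1], [0,0,0,1,0,1,1,2], [0,1,1,2,2,1,0,0], [1,0,0,0,1,0,1,0], [1,2,1,0,0,0,2,1], [2,1,2,1,1,2,0,1], [1,2,2,1,1,0,1,2], [2,1,0,1,0,0,0,0], [0,0,1,2,1,2,1,0], [0,1,0,0,0,1,2,1], [1,0,1,0,2,1,0,1], [0,1,1,0,1,2,1,2], [1,0,2,1,0,1,0,0], [1,2,0,1,2,1,1,0], [2,1,1,2,1,0,2,1], [0,0,0,0,0,0,0,1]],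
  [[1,0,2,1,1,2,1,0], [1,2,0,1,0,1,2,1], [2,1,1,2,2,1,0,1], [0,0,0,0,1,0,1,2], [0,1,1,0,0,0,0,0], [0,0,1,0,2,1,1,0], [0,1,2,1,1,0,2,1], [1,0,0,1,0,0,0,1], [1,2,1,2,1,2,1,2], [2,1,0,0,0,1,0,0], [1,2,0,0,0,0,1,0], [2,1,1,0,1,2,2,1], [0,0,2,1,0,1,0,1], [0,1,0,1,2,1,1,2], [1,0,1,2,1,0,0,0], [0,1,1,2,0,1,1,0], [1,0,0,0,2,1,2,1], [1,2,1,0,1,0,0,1], [2,1,2,1,0,0,1,2], [0,0,0,1,1,2,0,0], [2,1,0,1,1,0,1,0], [0,0,1,2,0,0,2,1], [0,1,0,0,1,2,0,1], [1,0,1,0,0,1,1,2], [1,2,2,1,2,1,0,0]],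
  [[0,0,1,2,1,0,0,1], [0,1,0,0,0,0,1,2], [1,0,1,0,1,2,0,0], [1,2,2,1,0,1,1,0], [2,1,0,1,2,1,2,1], [1,2,0,1,1,2,0,1], [2,1,1,2,0,1,1,2], [0,0,0,0,2,1,0,0], [0,1,1,0,1,0,1,0], [1,0,2,1,0,0,2,1], [0,1,2,1,2,1,0,1], [1,0,0,1,1,0,1,2], [1,2,1,2,0,0,0,0], [2,1,0,0,1,2,1,0], [0,0,1,0,0,1,2,1], [2,1,1,0,0,0,0,1], [0,0,2,1,1,2,1,2], [0,1,0,1,0,1,0,0], [1,0,1,2,2,1,1,0], [1,2,0,0,1,0,2,1], [1,0,0,0,0,1,0,1], [1,2,1,0,2,1,1,2], [2,1,2,1,1,0,0,0], [0,0,0,1,0,0,1,0], [0,1,1,2,1,2,2,1]],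
  [[2,1,0,1,1,2,0,0], [0,0,1,2,0,1,1,0], [0,1,0,0,2,1,2,1], [1,0,1,0,1,0,0,1], [1,2,2,1,0,0,1,2], [1,0,2,1,2,1,0,0], [1,2,0,1,1,0,1,0], [2,1,1,2,0,0,2,1], [0,0,0,0,1,2,0,1], [0,1,1,0,0,1,1,2], [0,0,1,0,0,0,0,0], [0,1,2,1,1,2,1,0], [1,0,0,1,0,1,2,1], [1,2,1,2,2,1,0,1], [2,1,0,0,1,0,1,2], [1,2,0,0,0,1,0,0], [2,1,1,0,2,1,1,0], [0,0,2,1,1,0,2,1], [0,1,0,1,0,0,0,1], [1,0,1,2,1,2,1,2], [0,1,1,2,1,0,0,0], [1,0,0,0,0,0,1,0], [1,2,1,0,1,2,2,1], [2,1,2,1,0,1,0,1], [0,0,0,1,2,1,1,2]],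
  [[1,0,0,0,1,0,2,1], [1,2,1,0,0,0,0,1], [2,1,2,1,1,2,1,2], [0,0,0,1,0,1,0,0], [0,1,1,2,2,1,1,0], [0,0,1,2,1,2,2,1], [0,1,0,0,0,1,0,1], [1,0,1,0,2,1,1,2], [1,2,2,1,1,0,0,0], [2,1,0,1,0,0,1,0], [1,2,0,1,2,1,2,1], [2,1,1,2,1,0,0,1], [0,0,0,0,0,0,1,2], [0,1,1,0,1,2,0,0], [1,0,2,1,0,1,1,0], [0,1,2,1,0,0,2,1], [1,0,0,1,1,2,0,1], [1,2,1,2,0,1,1,2], [2,1,0,0,2,1,0,0], [0,0,1,0,1,0,1,0], [2,1,1,0,0,1,2,1], [0,0,2,1,2,1,0,1], [0,1,0,1,1,0,1,2], [1,0,1,2,0,0,0,0], [1,2,0,0,1,2,1,0]],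
  [[0,0,2,1,0,1,1,2], [0,1,0,1,2,1,0,0], [1,0,1,2,1,0,1,0], [1,2,0,0,0,0,2,1], [2,1,1,0,1,2,0,1], [1,2,1,0,1,0,1,2], [2,1,2,1,0,0,0,0], [0,0,0,1,1,2,1,0], [0,1,1,2,0,1,2,1], [1,0,0,0,2,1,0,1], [0,1,0,0,1,2,1,2], [1,0,1,0,0,1,0,0], [1,2,2,1,2,1,1,0], [2,1,0,1,1,0,2,1], [0,0,1,2,0,0,0,1], [2,1,1,2,2,1,1,2], [0,0,0,0,1,0,0,0], [0,1,1,0,0,0,1,0], [1,0,2,1,1,2,2,1], [1,2,0,1,0,1,0,1], [1,0,0,1,0,0,1,2], [1,2,1,2,1,2,0,0], [2,1,0,0,0,1,1,0], [0,0,1,0,2,1,2,1], [0,1,2,1,1,0,0,1]],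
  [[1,2,1,2,0,0,1,0], [2,1,0,0,1,2,2,1], [0,0,1,0,0,1,0,1], [0,1,2,1,2,1,1,2], [1,0,0,1,1,0,0,0], [0,1,0,1,0,1,1,0], [1,0,1,2,2,1,2,1], [1,2,0,0,1,0,0,1], [2,1,1,0,0,0,1,2], [0,0,2,1,1,2,0,0], [2,1,2,1,1,0,1,0], [0,0,0,1,0,0,2,1], [0,1,1,2,1,2,0,1], [1,0,0,0,0,1,1,2], [1,2,1,0,2,1,0,0], [1,0,1,0,1,2,1,0], [1,2,2,1,0,1,2,1], [2,1,0,1,2,1,0,1], [0,0,1,2,1,0,1,2], [0,1,0,0,0,0,0,0], [0,0,0,0,2,1,1,0], [0,1,1,0,1,0,2,1], [1,0,2,1,0,0,0,1], [1,2,0,1,1,2,1,2], [2,1,1,2,0,1,0,0]],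
  [[0,1,1,0,2,1,0,1], [1,0,2,1,1,0,1,2], [1,2,0,1,0,0,0,0], [2,1,1,2,1,2,1,0], [0,0,0,0,0,1,2,1], [2,1,0,0,0,0,0,1], [0,0,1,0,1,2,1,2], [0,1,2,1,0,1,0,0], [1,0,0,1,2,1,1,0], [1,2,1,2,1,0,2,1], [1,0,1,2,0,1,0,1], [1,2,0,0,2,1,1,2], [2,1,1,0,1,0,0,0], [0,0,2,1,0,0,1,0], [0,1,0,1,1,2,2,1], [0,0,0,1,1,0,0,1], [0,1,1,2,0,0,1,2], [1,0,0,0,1,2,0,0], [1,2,1,0,0,1,1,0], [2,1,2,1,2,1,2,1], [1,2,2,1,1,2,0,1], [2,1,0,1,0,1,1,2], [0,0,1,2,2,1,0,0], [0,1,0,0,1,0,1,0], [1,0,1,0,0,0,2,1]]]"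

lemma square16_magic: "magic_square 16 222222220 (array_of square16)"
  unfolding magic_square_def array_of_def
  by (simp only: all_less_iff_list_all sum_lessThan_eq_sum_list) code_simp

lemma square16_squares_magic:
  "magic_square 16 4017512800668956 (\<lambda>i j. (array_of square16 i j)\<^sup>2)"
  unfolding magic_square_def array_of_def
  by (simp only: all_less_iff_list_all sum_lessThan_eq_sum_list) code_simp

lemma square16_blocks: "\<forall>p<4. \<forall>q<4. magic_square 4 55555555 (block 4 p q (array_of square16))"
  unfolding magic_square_def block_def array_of_def
  by (simp only: all_less_iff_list_all sum_lessThan_eq_sum_list) code_simp

lemma square16_entries:
  "distinct_entries 16 (array_of square16) \<and> (\<forall>i<16. \<forall>j<16. digits_012 (array_of square16 i j))"
  by (rule certified_entries_lists[where DS = digits16 and L = 8 and decode = decode16]) code_simp+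

lemma square25_magic: "magic_square 25 222222220 (array_of square25)"
  unfolding magic_square_def array_of_def
  by (simp only: all_less_iff_list_all sum_lessThan_eq_sum_list) code_simp

lemma square25_squares_magic:
  "magic_square 25 3469458017410630 (\<lambda>i j. (array_of square25 i j)\<^sup>2)"
  unfolding magic_square_def array_of_def
  by (simp only: all_less_iff_list_all sum_lessThan_eq_sum_list) code_simp

lemma square25_pandiagonal: "pandiagonal 25 222222220 (array_of square25)"
  unfolding pandiagonal_def array_of_def
  by (simp only: all_less_iff_list_all sum_lessThan_eq_sum_list) code_simp

lemma square25_blocks: "\<forall>p<5. \<forall>q<5. magic_square 5 44444444 (block 5 p q (array_of square25))"
  unfolding magic_square_def block_def array_of_def
  by (simp only: all_less_iff_list_all sum_lessThan_eq_sum_list) code_simp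

lemma square25_entries:
  "distinct_entries 25 (array_of square25) \<and> (\<forall>i<25. \<forall>j<25. digits_012 (array_of square25 i j))"
  by (rule certified_entries_lists[where DS = digits25 and L = 8 and decode = decode25]) code_simp+

theorem mainTheorem7:
  shows "(\<exists>A :: nat \<Rightarrow> nat \<Rightarrow> int.
            bimagic_square 16 222222220 A \<and>
            distinct_entries 16 A \<and>
            (\<forall>i<16. \<forall>j<16. digits_012 (A i j)) \<and>
            (\<forall>p<4. \<forall>q<4. magic_square 4 55555555 (block 4 p q A))) \<and>
         (\<exists>B :: nat \<Rightarrow> nat \<Rightarrow> int.
            bimagic_square 25 222222220 B \<and>
            pandiagonal 25 222222220 B \<and>
            distinct_entries 25 B \<and>
            (\<forall>i<25. \<forall>j<25. digits_012 (B i j)) \<and>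
            (\<forall>p<5. \<forall>q<5. magic_square 5 44444444 (block 5 p q B)))"
proof -
  have "bimagic_square 16 222222220 (array_of square16)"
    unfolding bimagic_square_def using square16_magic square16_squares_magic by blast
  moreover have "bimagic_square 25 222222220 (array_of square25)"
    unfolding bimagic_square_def using square25_magic square25_squares_magic by blast
  ultimately show ?thesis
    using square16_entries square16_blocks
      square25_pandiagonal square25_entries square25_blocks
    by blast
qed

end
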